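(* A complex linear map $\Phi: M_n(\mathbb{C}) \to M_r(\mathbb{C})$ preserves range orthogonality, i.e. $\Phi(A)^*\Phi(B) = 0$ whenever $A^*B = 0$, if and only if there exist a nonnegative integer $k$ with $nk \le r$ and matrices $S, T \in M_r(\mathbb{C})$ with $S^*S = I_r$ such that $$\Phi(A) = S\begin{pmatrix} I_k\otimes A & 0\\ 0 & 0_{r-nk}\end{pmatrix}T\quad\text{for all } A\in M_n(\mathbb{C}).$$
   Context: $A^*$ denotes the conjugate transpose; $I_k\otimes A$ denotes $A\oplus\cdots\oplus A$ ($k$ copies). *)

theory Defs
  imports "Jordan_Normal_Form.Schur_Decomposition"
begin

definition lin_mat_map :: "nat \<Rightarrow> nat \<Rightarrow> (complex mat \<Rightarrow> complex mat) \<Rightarrow> bool" where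
  "lin_mat_map n r \<Phi> \<longleftrightarrow>
     (\<forall>A \<in> carrier_mat n n. \<Phi> A \<in> carrier_mat r r) \<and>
     (\<forall>A \<in> carrier_mat n n. \<forall>B \<in> carrier_mat n n. \<Phi> (A + B) = \<Phi> A + \<Phi> B) \<and>
     (\<forall>c. \<forall>A \<in> carrier_mat n n. \<Phi> (c \<cdot>\<^sub>m A) = c \<cdot>\<^sub>m \<Phi> A)"

text \<open>The block matrix diag(I_k tensor A, 0_(r-nk)) of size r, where I_k tensor A = A + ... + A (k copies, direct sum).\<close>
definition pad_kron :: "nat \<Rightarrow> nat \<Rightarrow> complex mat \<Rightarrow> complex mat" where
  "pad_kron r k A = (let m = dim_row A * k in
     four_block_mat (diag_block_mat (replicate k A)) (0\<^sub>m m (r - m))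
                    (0\<^sub>m (r - m) m) (0\<^sub>m (r - m) (r - m)))"

end

theory Submission
  imports Defs
begin

text \<open>
  Write \<open>E i j\<close> for the matrix units and \<open>F i j = \<Phi> (E i j)\<close>. If \<open>\<Phi>\<close> preserves range
  orthogonality, then \<open>(F i j)\<^sup>* F i' l = 0\<close> for \<open>i \<noteq> i'\<close>, and \<open>(F i j)\<^sup>* F i l\<close> does not depend on \<open>i\<close>
  (apply \<open>\<Phi>\<close> to the orthogonal pair \<open>E i j + E i' j\<close>, \<open>E i l - E i' l\<close>). So the columns of
  \<open>F i 0, \<dots>, F i (n - 1)\<close>, for \<open>i = 0, \<dots>, n - 1\<close>, form \<open>n\<close> mutually orthogonal families with a
  common Gram matrix. Running Gram--Schmidt on all of them in parallel yields orthonormal vectors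
  \<open>w i b\<close> (\<open>i < n\<close>, \<open>b < k\<close>) in which every column has coordinates independent of \<open>i\<close>. Hence
  \<open>n k \<le> r\<close>; completing the \<open>w i b\<close> to an orthonormal basis gives the isometry \<open>S\<close>, and \<open>T\<close> records
  the coordinates. Conversely, \<open>A \<mapsto> diag(I\<^sub>k \<otimes> A, 0)\<close> is multiplicative and commutes with adjoints,
  and \<open>S\<^sup>* S = I\<close> cancels in \<open>(S P T)\<^sup>* (S Q T)\<close>.
\<close>

subsection \<open>Adjoints of matrix products\<close>

lemma index_mult_mat_sum:
  assumes "A \<in> carrier_mat a b" "B \<in> carrier_mat b c" "i < a" "j < c"
  shows "(A * B) $$ (i, j) = (\<Sum>l<b. A $$ (i, l) * B $$ (l, j))"
  using assms by (auto simp: scalar_prod_def atLeast0LessThan intro!: sum.cong)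

lemma dim_mat_adjoint [simp]:
  "dim_row (mat_adjoint A) = dim_col A" "dim_col (mat_adjoint A) = dim_row A"
  unfolding mat_adjoint_def by auto

lemma mat_adjoint_carrier [simp]: "A \<in> carrier_mat a b \<Longrightarrow> mat_adjoint A \<in> carrier_mat b a"
  by auto

lemma index_mat_adjoint [simp]:
  "i < dim_col A \<Longrightarrow> j < dim_row A \<Longrightarrow> mat_adjoint A $$ (i, j) = cnj (A $$ (j, i))"
  unfolding mat_adjoint_def by (simp add: mat_of_rows_index)

lemma index_adjoint_mult_mat:
  assumes "A \<in> carrier_mat a b" "B \<in> carrier_mat a c" "i < b" "j < c"
  shows "(mat_adjoint A * B) $$ (i, j) = (\<Sum>l<a. cnj (A $$ (l, i)) * B $$ (l, j))"
  using index_mult_mat_sum[OF mat_adjoint_carrier[OF assms(1)] assms(2-4)] assms by simp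

lemma mat_adjoint_mult:
  fixes A B :: "complex mat"
  assumes A: "A \<in> carrier_mat a b" and B: "B \<in> carrier_mat b c"
  shows "mat_adjoint (A * B) = mat_adjoint B * mat_adjoint A"
proof (rule eq_matI)
  fix i j assume "i < dim_row (mat_adjoint B * mat_adjoint A)" "j < dim_col (mat_adjoint B * mat_adjoint A)"
  with A B have i: "i < c" and j: "j < a" by auto
  have "mat_adjoint (A * B) $$ (i, j) = cnj ((A * B) $$ (j, i))"
    using A B i j by simp
  also have "\<dots> = (\<Sum>l<b. cnj (A $$ (j, l)) * cnj (B $$ (l, i)))"
    by (simp add: index_mult_mat_sum[OF A B j i])
  also have "\<dots> = (mat_adjoint B * mat_adjoint A) $$ (i, j)"
    using A B i j
    by (subst index_mult_mat_sum[OF mat_adjoint_carrier[OF B] mat_adjoint_carrier[OF A] i j])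
      (auto simp: mult.commute)
  finally show "mat_adjoint (A * B) $$ (i, j) = (mat_adjoint B * mat_adjoint A) $$ (i, j)" .
qed (use A B in auto)

lemma adjoint_isometry_sandwich:
  fixes S P Q T :: "complex mat"
  assumes S: "S \<in> carrier_mat m r" and P: "P \<in> carrier_mat r r" and Q: "Q \<in> carrier_mat r r"
    and T: "T \<in> carrier_mat r c" and isometry: "mat_adjoint S * S = 1\<^sub>m r"
  shows "mat_adjoint (S * P * T) * (S * Q * T) = mat_adjoint T * (mat_adjoint P * Q) * T"
proof -
  have SP: "mat_adjoint S \<in> carrier_mat r m" "mat_adjoint P \<in> carrier_mat r r"
    and QT: "Q * T \<in> carrier_mat r c" using S P Q T by auto
  have "mat_adjoint (S * P * T) = mat_adjoint T * (mat_adjoint P * mat_adjoint S)"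
    using mat_adjoint_mult[OF mult_carrier_mat[OF S P] T] mat_adjoint_mult[OF S P] by simp
  moreover have "S * Q * T = S * (Q * T)" using S Q T by (rule assoc_mult_mat)
  ultimately have "mat_adjoint (S * P * T) * (S * Q * T)
      = mat_adjoint T * (mat_adjoint P * (mat_adjoint S * (S * (Q * T))))"
    using assoc_mult_mat[OF mat_adjoint_carrier[OF T] mult_carrier_mat[OF SP(2,1)] mult_carrier_mat[OF S QT]]
      assoc_mult_mat[OF SP(2,1) mult_carrier_mat[OF S QT]] by simp
  also have "mat_adjoint S * (S * (Q * T)) = Q * T"
    using assoc_mult_mat[OF SP(1) S QT] QT by (simp add: isometry left_mult_one_mat)
  also have "mat_adjoint T * (mat_adjoint P * (Q * T)) = mat_adjoint T * (mat_adjoint P * Q) * T"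
    using assoc_mult_mat[OF mat_adjoint_carrier[OF T] mult_carrier_mat[OF SP(2) Q] T]
      assoc_mult_mat[OF SP(2) Q T] by simp
  finally show ?thesis .
qed

subsection \<open>The amplification \<open>pad_kron\<close>\<close>

lemma sum_lessThan_mult_blocks: "(\<Sum>d<(n::nat) * k. G d) = (\<Sum>b<k. \<Sum>i<n. G (b * n + i))"
proof -
  have "(\<Sum>d<n * k. G d) = (\<Sum>b<k. sum G {b * n..<b * n + n})"
    using sum.nat_group[where g = G and k = n and n = k] by (simp add: mult.commute)
  also have "\<dots> = (\<Sum>b<k. \<Sum>i<n. G (b * n + i))"
  proof (rule sum.cong)
    fix b
    show "sum G {b * n..<b * n + n} = (\<Sum>i<n. G (b * n + i))"
      using sum.shift_bounds_nat_ivl[of G 0 "b * n" n] by (simp add: atLeast0LessThan add.commute)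
  qed simp
  finally show ?thesis .
qed

lemma sum_lessThan_if_less:
  fixes m r :: nat
  assumes "m \<le> r"
  shows "(\<Sum>d<r. if d < m then G d else 0) = (\<Sum>d<m. G d)"
proof -
  have "{d \<in> {..<r}. d < m} = {..<m}" using assms by auto
  then show ?thesis using sum.inter_filter[of "{..<r}" G "\<lambda>d. d < m"] by simp
qed

lemma block_index_less: "i < n \<Longrightarrow> b < k \<Longrightarrow> b * n + i < n * (k::nat)"
proof -
  assume "i < n" "b < k"
  then have "b * n + i < Suc b * n" by simp
  also have "\<dots> \<le> n * k" using \<open>b < k\<close> mult_le_mono1[of "Suc b" k n] by (simp add: mult.commute)
  finally show ?thesis .
qed

lemma sum_pad_kron_block:
  fixes n k r b :: nat
  assumes nk: "n * k \<le> r" and b: "b < k"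
  shows "(\<Sum>d<r. if d < n * k \<and> d div n = b then G d else 0) = (\<Sum>i<n. G (b * n + i))"
proof -
  have "(\<Sum>d<r. if d < n * k \<and> d div n = b then G d else 0)
      = (\<Sum>d<n * k. if d div n = b then G d else 0)"
    by (subst sum_lessThan_if_less[OF nk, symmetric]) (rule sum.cong, auto)
  also have "\<dots> = (\<Sum>b'<k. if b' = b then \<Sum>i<n. G (b' * n + i) else 0)"
    unfolding sum_lessThan_mult_blocks
  proof (rule sum.cong[OF refl])
    fix b'
    show "(\<Sum>i<n. if (b' * n + i) div n = b then G (b' * n + i) else 0)
        = (if b' = b then \<Sum>i<n. G (b' * n + i) else 0)"
      by (cases "b' = b") (auto intro!: sum.cong)
  qed
  also have "\<dots> = (\<Sum>i<n. G (b * n + i))"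
    using b by simp
  finally show ?thesis .
qed

lemma diag_block_mat_replicate_carrier:
  "A \<in> carrier_mat n n \<Longrightarrow> diag_block_mat (replicate k A) \<in> carrier_mat (n * k) (n * k)"
  by (induct k) (auto simp: Let_def four_block_mat_def)

lemma index_diag_block_mat_replicate:
  assumes A: "A \<in> carrier_mat n n" and "p < n * k" "q < n * k"
  shows "diag_block_mat (replicate k A) $$ (p, q)
       = (if p div n = q div n then A $$ (p mod n, q mod n) else 0)"
  using assms(2,3)
proof (induct k arbitrary: p q)
  case (Suc k)
  have D: "diag_block_mat (replicate k A) \<in> carrier_mat (n * k) (n * k)"
    using diag_block_mat_replicate_carrier[OF A] .
  have n: "n > 0" using Suc by (cases n) auto
  have split: "diag_block_mat (replicate (Suc k) A)
      = four_block_mat A (0\<^sub>m n (n * k)) (0\<^sub>m (n * k) n) (diag_block_mat (replicate k A))"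
    using A D by (simp add: Let_def)
  consider "p < n" | "\<not> p < n" "q < n" | "\<not> (p < n \<or> q < n)" by blast
  then show ?case
  proof cases
    case 1
    then show ?thesis using Suc.prems A D n unfolding split by (auto simp: div_if)
  next
    case 2
    then show ?thesis using Suc.prems A D n unfolding split by (auto simp: div_if)
  next
    case 3
    note False = this
    have "p - n < n * k" "q - n < n * k" using Suc.prems False by auto
    with Suc.hyps have "diag_block_mat (replicate k A) $$ (p - n, q - n)
        = (if (p - n) div n = (q - n) div n then A $$ ((p - n) mod n, (q - n) mod n) else 0)" .
    moreover have "(p - n) div n = p div n - 1" "(q - n) div n = q div n - 1"
      "(p - n) mod n = p mod n" "(q - n) mod n = q mod n" "p div n \<ge> 1" "q div n \<ge> 1"
      using False n by (auto simp: div_if mod_if)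
    ultimately show ?thesis using Suc.prems A D False unfolding split by auto
  qed
qed simp

lemma pad_kron_carrier: "A \<in> carrier_mat n n \<Longrightarrow> n * k \<le> r \<Longrightarrow> pad_kron r k A \<in> carrier_mat r r"
  unfolding pad_kron_def Let_def using diag_block_mat_replicate_carrier[of A n k] by auto

lemma index_pad_kron:
  assumes A: "A \<in> carrier_mat n n" and nk: "n * k \<le> r" and "p < r" "q < r"
  shows "pad_kron r k A $$ (p, q)
       = (if p < n * k \<and> q < n * k \<and> p div n = q div n then A $$ (p mod n, q mod n) else 0)"
proof -
  have "dim_row A = n" using A by auto
  then show ?thesis
    unfolding pad_kron_def Let_def
    using assms diag_block_mat_replicate_carrier[OF A, of k] index_diag_block_mat_replicate[OF A, of p k q]
    by auto
qed

lemma index_mult_pad_kron: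
  assumes M: "M \<in> carrier_mat a r" and A: "A \<in> carrier_mat n n" and nk: "n * k \<le> r"
    and p: "p < a" and d: "d < r"
  shows "(M * pad_kron r k A) $$ (p, d)
       = (if d < n * k then \<Sum>i<n. M $$ (p, d div n * n + i) * A $$ (i, d mod n) else 0)"
proof -
  have "(M * pad_kron r k A) $$ (p, d) = (\<Sum>e<r. M $$ (p, e) * pad_kron r k A $$ (e, d))"
    using index_mult_mat_sum[OF M pad_kron_carrier[OF A nk] p d] .
  also have "\<dots> = (if d < n * k then \<Sum>e<r. if e < n * k \<and> e div n = d div n
                       then M $$ (p, e) * A $$ (e mod n, d mod n) else 0 else 0)"
    using d by (auto simp: index_pad_kron[OF A nk] intro!: sum.cong)
  also have "\<dots> = (if d < n * k then \<Sum>i<n. M $$ (p, d div n * n + i) * A $$ (i, d mod n) else 0)"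
  proof (cases "d < n * k")
    case True
    then have "d div n < k" by (simp add: less_mult_imp_div_less mult.commute)
    from sum_pad_kron_block[OF nk this, of "\<lambda>e. M $$ (p, e) * A $$ (e mod n, d mod n)"]
    show ?thesis using True by simp
  qed simp
  finally show ?thesis .
qed

lemma index_mult_pad_kron_mult:
  assumes M: "M \<in> carrier_mat a r" and N: "N \<in> carrier_mat r c" and A: "A \<in> carrier_mat n n"
    and nk: "n * k \<le> r" and p: "p < a" and q: "q < c"
  shows "(M * pad_kron r k A * N) $$ (p, q)
       = (\<Sum>b<k. \<Sum>i<n. \<Sum>j<n. M $$ (p, b * n + i) * A $$ (i, j) * N $$ (b * n + j, q))"
proof -
  have MP: "M * pad_kron r k A \<in> carrier_mat a r" using M pad_kron_carrier[OF A nk] by simp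
  have "(M * pad_kron r k A * N) $$ (p, q) = (\<Sum>d<r. (M * pad_kron r k A) $$ (p, d) * N $$ (d, q))"
    by (rule index_mult_mat_sum[OF MP N p q])
  also have "\<dots> = (\<Sum>d<r. if d < n * k
      then (\<Sum>i<n. M $$ (p, d div n * n + i) * A $$ (i, d mod n)) * N $$ (d, q) else 0)"
    by (rule sum.cong) (simp_all add: index_mult_pad_kron[OF M A nk p])
  also have "\<dots> = (\<Sum>d<n * k. (\<Sum>i<n. M $$ (p, d div n * n + i) * A $$ (i, d mod n)) * N $$ (d, q))"
    by (rule sum_lessThan_if_less[OF nk])
  also have "\<dots> = (\<Sum>b<k. \<Sum>j<n. \<Sum>i<n. M $$ (p, b * n + i) * A $$ (i, j) * N $$ (b * n + j, q))"
    by (subst sum_lessThan_mult_blocks) (auto simp: sum_distrib_right intro!: sum.cong)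
  also have "\<dots> = (\<Sum>b<k. \<Sum>i<n. \<Sum>j<n. M $$ (p, b * n + i) * A $$ (i, j) * N $$ (b * n + j, q))"
    by (rule sum.cong[OF refl], rule sum.swap)
  finally show ?thesis .
qed

lemma mat_adjoint_pad_kron:
  fixes A :: "complex mat"
  assumes A: "A \<in> carrier_mat n n" and nk: "n * k \<le> r"
  shows "mat_adjoint (pad_kron r k A) = pad_kron r k (mat_adjoint A)"
proof (rule eq_matI)
  fix p q assume "p < dim_row (pad_kron r k (mat_adjoint A))" "q < dim_col (pad_kron r k (mat_adjoint A))"
  then have p: "p < r" and q: "q < r"
    using pad_kron_carrier[OF mat_adjoint_carrier[OF A] nk] by auto
  show "mat_adjoint (pad_kron r k A) $$ (p, q) = pad_kron r k (mat_adjoint A) $$ (p, q)"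
    using p q pad_kron_carrier[OF A nk] A
    by (cases "n = 0") (auto simp: index_pad_kron[OF A nk] index_pad_kron[OF mat_adjoint_carrier[OF A] nk])
qed (use pad_kron_carrier[OF A nk] pad_kron_carrier[OF mat_adjoint_carrier[OF A] nk] in auto)

lemma pad_kron_mult:
  assumes A: "A \<in> carrier_mat n n" and B: "B \<in> carrier_mat n n" and nk: "n * k \<le> r"
  shows "pad_kron r k (A * B) = pad_kron r k A * pad_kron r k B"
proof (rule eq_matI)
  have PA: "pad_kron r k A \<in> carrier_mat r r" using pad_kron_carrier[OF A nk] .
  have AB: "A * B \<in> carrier_mat n n" using A B by simp
  fix c d assume "c < dim_row (pad_kron r k A * pad_kron r k B)" "d < dim_col (pad_kron r k A * pad_kron r k B)"
  then have c: "c < r" and d: "d < r" using PA pad_kron_carrier[OF B nk] by auto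
  have "(pad_kron r k A * pad_kron r k B) $$ (c, d)
      = (if d < n * k then \<Sum>i<n. pad_kron r k A $$ (c, d div n * n + i) * B $$ (i, d mod n) else 0)"
    by (rule index_mult_pad_kron[OF PA B nk c d])
  also have "\<dots> = pad_kron r k (A * B) $$ (c, d)"
  proof (cases "d < n * k")
    case True
    then have "d div n < k" by (simp add: less_mult_imp_div_less mult.commute)
    then have "pad_kron r k A $$ (c, d div n * n + i)
        = (if c < n * k \<and> c div n = d div n then A $$ (c mod n, i) else 0)" if "i < n" for i
      using that c nk block_index_less[OF that, of "d div n" k] by (auto simp: index_pad_kron[OF A nk])
    then show ?thesis
      using True c d
      by (cases "n = 0") (auto simp: index_pad_kron[OF AB nk] index_mult_mat_sum[OF A B] intro!: sum.cong)
  qed (use c d in \<open>simp add: index_pad_kron[OF AB nk]\<close>)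
  finally show "pad_kron r k (A * B) $$ (c, d) = (pad_kron r k A * pad_kron r k B) $$ (c, d)" ..
qed (use pad_kron_carrier[OF A nk] pad_kron_carrier[OF B nk] pad_kron_carrier[of "A * B" n k r] A B nk in auto)

lemma pad_kron_zero:
  assumes nk: "n * k \<le> r"
  shows "pad_kron r k (0\<^sub>m n n) = 0\<^sub>m r r"
proof -
  have Z: "0\<^sub>m n n \<in> carrier_mat n n" by simp
  show ?thesis
  proof (rule eq_matI)
    fix i j assume ij: "i < dim_row (0\<^sub>m r r :: complex mat)" "j < dim_col (0\<^sub>m r r :: complex mat)"
    have "0 < n" if "i < n * k" using that by (cases n) auto
    then show "pad_kron r k (0\<^sub>m n n) $$ (i, j) = 0\<^sub>m r r $$ (i, j)"
      using ij by (subst index_pad_kron[OF Z nk]) auto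
  qed (use pad_kron_carrier[OF Z nk] in auto)
qed

lemma adjoint_mult_pad_kron_eq_zero:
  fixes A B :: "complex mat"
  assumes A: "A \<in> carrier_mat n n" and B: "B \<in> carrier_mat n n" and nk: "n * k \<le> r"
    and orth: "mat_adjoint A * B = 0\<^sub>m n n"
  shows "mat_adjoint (pad_kron r k A) * pad_kron r k B = 0\<^sub>m r r"
  using pad_kron_mult[OF mat_adjoint_carrier[OF A] B nk, symmetric]
  by (simp add: mat_adjoint_pad_kron[OF A nk] orth pad_kron_zero[OF nk])

lemma pad_kron_sandwich_preserves_range_orthogonality:
  fixes \<Phi> :: "complex mat \<Rightarrow> complex mat"
  assumes nk: "n * k \<le> r" and S: "S \<in> carrier_mat r r" and T: "T \<in> carrier_mat r r"
    and isometry: "mat_adjoint S * S = 1\<^sub>m r"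
    and \<Phi>: "\<forall>A \<in> carrier_mat n n. \<Phi> A = S * pad_kron r k A * T"
  shows "\<forall>A \<in> carrier_mat n n. \<forall>B \<in> carrier_mat n n.
           mat_adjoint A * B = 0\<^sub>m n n \<longrightarrow> mat_adjoint (\<Phi> A) * \<Phi> B = 0\<^sub>m r r"
proof (intro ballI impI)
  fix A B :: "complex mat"
  assume A: "A \<in> carrier_mat n n" and B: "B \<in> carrier_mat n n" and AB: "mat_adjoint A * B = 0\<^sub>m n n"
  have "mat_adjoint (\<Phi> A) * \<Phi> B
      = mat_adjoint T * (mat_adjoint (pad_kron r k A) * pad_kron r k B) * T"
    using \<Phi> A B
      adjoint_isometry_sandwich[OF S pad_kron_carrier[OF A nk] pad_kron_carrier[OF B nk] T isometry]
    by simp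
  also have "\<dots> = 0\<^sub>m r r"
    using adjoint_mult_pad_kron_eq_zero[OF A B nk AB] T by simp
  finally show "mat_adjoint (\<Phi> A) * \<Phi> B = 0\<^sub>m r r" .
qed

subsection \<open>Simultaneous Gram--Schmidt orthonormalisation\<close>

definition cinner :: "nat \<Rightarrow> (nat \<Rightarrow> complex) \<Rightarrow> (nat \<Rightarrow> complex) \<Rightarrow> complex" where
  "cinner r u v = (\<Sum>p<r. cnj (u p) * v p)"

lemma cinner_commute: "cinner r v u = cnj (cinner r u v)"
  unfolding cinner_def by (simp add: mult.commute)

lemma cinner_self: "cinner r u u = of_real (\<Sum>p<r. (cmod (u p))\<^sup>2)"
  unfolding cinner_def of_real_sum
  by (rule sum.cong) (auto simp: complex_norm_square mult.commute simp del: of_real_power)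

lemma cinner_self_eq_zero:
  assumes "cinner r u u = 0" "p < r"
  shows "u p = 0"
proof -
  have "(\<Sum>p<r. (cmod (u p))\<^sup>2) = 0" using assms(1) unfolding cinner_self of_real_eq_0_iff .
  then have "\<forall>p\<in>{..<r}. (cmod (u p))\<^sup>2 = 0" by (subst sum_nonneg_eq_0_iff[symmetric]) auto
  then show ?thesis using assms(2) by auto
qed

lemma cinner_self_square:
  assumes "cinner r u u \<noteq> 0"
  obtains c where "c \<noteq> 0" "cnj c * c = cinner r u u"
proof -
  define t where "t = (\<Sum>p<r. (cmod (u p))\<^sup>2)"
  have t: "cinner r u u = of_real t" unfolding t_def by (rule cinner_self)
  have "t \<ge> 0" unfolding t_def by (simp add: sum_nonneg)
  moreover have "t \<noteq> 0" using assms t by auto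
  ultimately have "t > 0" by simp
  then show ?thesis
    by (intro that[of "of_real (sqrt t)"]) (simp_all add: t flip: of_real_mult)
qed

lemma cinner_sum_right: "cinner r u (\<lambda>p. \<Sum>b\<in>B. c b * v b p) = (\<Sum>b\<in>B. c b * cinner r u (v b))"
  unfolding cinner_def by (simp add: sum_distrib_left sum.swap[of _ B] mult.left_commute)

lemma cinner_diff_sum_right:
  "cinner r u (\<lambda>p. v p - (\<Sum>b\<in>B. c b * z b p)) = cinner r u v - (\<Sum>b\<in>B. c b * cinner r u (z b))"
  unfolding cinner_def
  by (simp add: right_diff_distrib sum_subtractf sum_distrib_left sum.swap[of _ B] mult.assoc mult.left_commute)

lemma cinner_diff_sum_left:
  "cinner r (\<lambda>p. v p - (\<Sum>b\<in>B. c b * z b p)) u = cinner r v u - (\<Sum>b\<in>B. cnj (c b) * cinner r (z b) u)"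
  unfolding cinner_def
  by (simp add: left_diff_distrib sum_subtractf sum_distrib_left sum_distrib_right sum.swap[of _ B]
      mult.assoc mult.left_commute)

lemma cinner_divide_right: "cinner r u (\<lambda>p. v p / a) = cinner r u v / a"
  unfolding cinner_def by (simp add: sum_divide_distrib)

lemma cinner_divide_left: "cinner r (\<lambda>p. v p / a) u = cinner r v u / cnj a"
  unfolding cinner_def by (simp add: sum_divide_distrib)

definition orthonormal :: "nat \<Rightarrow> 'i set \<Rightarrow> ('i \<Rightarrow> nat \<Rightarrow> complex) \<Rightarrow> bool" where
  "orthonormal r I v \<longleftrightarrow> (\<forall>c\<in>I. \<forall>c'\<in>I. cinner r (v c) (v c') = (if c = c' then 1 else 0))"

lemma orthonormalD:
  "orthonormal r I v \<Longrightarrow> c \<in> I \<Longrightarrow> c' \<in> I \<Longrightarrow> cinner r (v c) (v c') = (if c = c' then 1 else 0)"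
  unfolding orthonormal_def by blast

lemma orthonormal_reindex:
  assumes "orthonormal r J v" "inj_on g I" "g ` I \<subseteq> J"
  shows "orthonormal r I (v \<circ> g)"
  unfolding orthonormal_def
proof (intro ballI)
  fix c c' assume c: "c \<in> I" "c' \<in> I"
  then have "g c \<in> J" "g c' \<in> J" using assms(3) by auto
  then show "cinner r ((v \<circ> g) c) ((v \<circ> g) c') = (if c = c' then 1 else 0)"
    using orthonormalD[OF assms(1)] inj_on_eq_iff[OF assms(2) c] by simp
qed

lemma orthonormal_coefficient:
  fixes u :: "nat \<Rightarrow> nat \<Rightarrow> complex"
  assumes orth: "orthonormal r {..<K} u" and b: "b < K"
    and v: "\<forall>p<r. v p = (\<Sum>b'<K. x b' * u b' p)"
  shows "x b = cinner r (u b) v"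
proof -
  have "cinner r (u b) v = cinner r (u b) (\<lambda>p. \<Sum>b'<K. x b' * u b' p)"
    unfolding cinner_def by (rule sum.cong) (simp_all add: v)
  also have "\<dots> = (\<Sum>b'<K. x b' * (if b = b' then 1 else 0))"
    unfolding cinner_sum_right by (rule sum.cong) (use orthonormalD[OF orth] b in simp_all)
  also have "\<dots> = x b" using b by (simp add: if_distrib cong: if_cong)
  finally show ?thesis ..
qed

lemma cinner_unit_vector: "\<alpha> < r \<Longrightarrow> cinner r u (\<lambda>p. if p = \<alpha> then 1 else 0) = cnj (u \<alpha>)"
  unfolding cinner_def by (simp add: if_distrib cong: if_cong)

lemma orthonormal_card_eq:
  fixes u :: "nat \<Rightarrow> nat \<Rightarrow> complex"
  assumes orth: "orthonormal r {..<K} u"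
    and span: "\<forall>\<alpha><r. \<exists>x. \<forall>p<r. (if p = \<alpha> then 1 else 0) = (\<Sum>b<K. x b * u b p)"
  shows "K = r"
proof -
  \<comment> \<open>Completeness relation for \<open>u\<close>; then compare the traces of both sides.\<close>
  have completeness: "(\<Sum>b<K. cnj (u b \<alpha>) * u b p) = (if p = \<alpha> then 1 else 0)"
    if \<alpha>: "\<alpha> < r" and p: "p < r" for \<alpha> p
  proof -
    obtain x where x: "\<forall>p<r. (if p = \<alpha> then 1 else 0) = (\<Sum>b<K. x b * u b p)"
      using span[rule_format, OF \<alpha>] ..
    have coeff: "x b = cnj (u b \<alpha>)" if "b < K" for b
      using orthonormal_coefficient[OF orth that x] cinner_unit_vector[OF \<alpha>] by simp
    have "(if p = \<alpha> then 1 else 0) = (\<Sum>b<K. x b * u b p)" using x[rule_format, OF p] .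
    also have "\<dots> = (\<Sum>b<K. cnj (u b \<alpha>) * u b p)"
      by (intro sum.cong) (simp_all add: coeff)
    finally show ?thesis ..
  qed
  have "(\<Sum>b<K. cinner r (u b) (u b)) = (\<Sum>b<K. 1)"
    by (rule sum.cong) (simp_all add: orthonormalD[OF orth])
  then have "of_nat K = (\<Sum>b<K. cinner r (u b) (u b))" by simp
  also have "\<dots> = (\<Sum>p<r. \<Sum>b<K. cnj (u b p) * u b p)"
    unfolding cinner_def by (rule sum.swap)
  also have "\<dots> = (\<Sum>p<r. 1)"
    by (rule sum.cong) (simp_all add: completeness)
  finally show ?thesis by simp
qed

definition uniform_gram ::
  "nat \<Rightarrow> nat \<Rightarrow> (nat \<Rightarrow> nat \<Rightarrow> nat \<Rightarrow> complex) \<Rightarrow> (nat \<Rightarrow> nat \<Rightarrow> complex) \<Rightarrow> bool" where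
  "uniform_gram r n f g \<longleftrightarrow>
     (\<forall>i<n. \<forall>i'<n. \<forall>\<alpha> \<beta>. cinner r (f i \<alpha>) (f i' \<beta>) = (if i = i' then g \<alpha> \<beta> else 0))"

text \<open>
  The \<open>n\<close> mutually orthogonal families \<open>f i\<close>, which share the Gram matrix \<open>g\<close>, are orthonormalised
  in parallel: after the vectors \<open>f i \<alpha>\<close> with \<open>\<alpha> < N\<close> have been processed, \<open>w i b\<close> (\<open>b < k\<close>) is
  the \<open>i\<close>-th copy of the \<open>b\<close>-th basis vector, the coefficients \<open>h\<close> of the \<open>f i \<alpha>\<close> along it do not depend
  on \<open>i\<close>, and neither do the coordinates of the processed vectors.
\<close>
definition gram_schmidt_stage ::
  "nat \<Rightarrow> nat \<Rightarrow> (nat \<Rightarrow> nat \<Rightarrow> nat \<Rightarrow> complex) \<Rightarrow> nat \<Rightarrow> (nat \<Rightarrow> nat \<Rightarrow> nat \<Rightarrow> complex) \<Rightarrow>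
    (nat \<Rightarrow> nat \<Rightarrow> complex) \<Rightarrow> nat \<Rightarrow> bool" where
  "gram_schmidt_stage r n f k w h N \<longleftrightarrow>
     orthonormal r ({..<n} \<times> {..<k}) (\<lambda>(i, b). w i b) \<and>
     (\<forall>i<n. \<forall>i'<n. \<forall>b<k. \<forall>\<alpha>. cinner r (w i b) (f i' \<alpha>) = (if i = i' then h b \<alpha> else 0)) \<and>
     (\<forall>\<alpha><N. \<exists>x. \<forall>i<n. \<forall>p<r. f i \<alpha> p = (\<Sum>b<k. x b * w i b p))"

lemma gram_schmidt_residual:
  assumes gram: "uniform_gram r n f g" and stage: "gram_schmidt_stage r n f k w h N"
    and e: "\<And>i. e i = (\<lambda>p. f i N p - (\<Sum>b<k. h b N * w i b p))"
    and H: "\<And>\<alpha>. H \<alpha> = g N \<alpha> - (\<Sum>b<k. cnj (h b N) * h b \<alpha>)"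
    and i: "i < n" and i': "i' < n"
  shows "b < k \<Longrightarrow> cinner r (w i b) (e i') = 0"
    and "cinner r (e i) (f i' \<alpha>) = (if i = i' then H \<alpha> else 0)"
    and "cinner r (e i) (e i') = (if i = i' then H N else 0)"
proof -
  have orth: "cinner r (w a b) (w a' b') = (if a = a' \<and> b = b' then 1 else 0)"
    if "a < n" "a' < n" "b < k" "b' < k" for a a' b b'
    using stage that orthonormalD[of r "{..<n} \<times> {..<k}" "\<lambda>(i, b). w i b" "(a, b)" "(a', b')"]
    by (simp add: gram_schmidt_stage_def)
  have coeff: "cinner r (w a b) (f a' \<alpha>) = (if a = a' then h b \<alpha> else 0)"
    if "a < n" "a' < n" "b < k" for a a' b \<alpha>
    using stage that by (simp add: gram_schmidt_stage_def)
  have perp: "cinner r (w a b) (e a') = 0" if "a < n" "a' < n" "b < k" for a a' b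
  proof -
    have "(\<Sum>b'<k. h b' N * cinner r (w a b) (w a' b'))
        = (\<Sum>b'<k. if a = a' \<and> b' = b then h b' N else 0)"
      by (rule sum.cong) (auto simp: orth that)
    also have "\<dots> = (if a = a' then h b N else 0)"
      using that(3) by (cases "a = a'") simp_all
    finally show ?thesis unfolding e cinner_diff_sum_right using coeff[OF that] by simp
  qed
  have residual_f: "cinner r (e a) (f a' \<alpha>) = (if a = a' then H \<alpha> else 0)" if "a < n" "a' < n" for a a' \<alpha>
  proof -
    have "(\<Sum>b<k. cnj (h b N) * cinner r (w a b) (f a' \<alpha>))
        = (if a = a' then \<Sum>b<k. cnj (h b N) * h b \<alpha> else 0)"
      by (cases "a = a'") (simp_all add: coeff that)
    then show ?thesis
      unfolding e cinner_diff_sum_left H using gram that by (simp add: uniform_gram_def)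
  qed
  have "(\<Sum>b<k. h b N * cinner r (e a) (w a' b)) = 0" if "a < n" "a' < n" for a a'
    using perp[OF that(2,1)] by (subst cinner_commute) simp
  then have residual_e: "cinner r (e a) (e a') = (if a = a' then H N else 0)" if "a < n" "a' < n" for a a'
    using that by (subst (2) e) (simp add: cinner_diff_sum_right residual_f)
  show "b < k \<Longrightarrow> cinner r (w i b) (e i') = 0" using perp i i' by blast
  show "cinner r (e i) (f i' \<alpha>) = (if i = i' then H \<alpha> else 0)" using residual_f i i' .
  show "cinner r (e i) (e i') = (if i = i' then H N else 0)" using residual_e i i' .
qed

lemma orthonormal_insert_block:
  assumes orth: "orthonormal r ({..<n} \<times> {..<k}) (\<lambda>(i, b). w i b)"
    and perp: "\<And>i i' b. i < n \<Longrightarrow> i' < n \<Longrightarrow> b < k \<Longrightarrow> cinner r (w i b) (u i') = 0"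
    and unit: "\<And>i i'. i < n \<Longrightarrow> i' < n \<Longrightarrow> cinner r (u i) (u i') = (if i = i' then 1 else 0)"
  shows "orthonormal r ({..<n} \<times> {..<Suc k}) (\<lambda>(i, b). if b = k then u i else w i b)"
  unfolding orthonormal_def
proof (intro ballI)
  fix c c' assume "c \<in> {..<n} \<times> {..<Suc k}" "c' \<in> {..<n} \<times> {..<Suc k}"
  then obtain i b i' b' where cc: "c = (i, b)" "c' = (i', b')" and ib: "i < n" "b \<le> k" "i' < n" "b' \<le> k"
    by (cases c, cases c') auto
  have old: "cinner r (w i b) (w i' b') = (if (i, b) = (i', b') then 1 else 0)" if "b < k" "b' < k"
    using orthonormalD[OF orth, of "(i, b)" "(i', b')"] ib that by simp
  consider "b = k" "b' = k" | "b = k" "b' < k" | "b < k" "b' = k" | "b < k" "b' < k"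
    using ib by linarith
  then show "cinner r ((\<lambda>(i, b). if b = k then u i else w i b) c)
      ((\<lambda>(i, b). if b = k then u i else w i b) c') = (if c = c' then 1 else 0)"
  proof cases
    case 1
    then show ?thesis using unit ib cc by simp
  next
    case 2
    then show ?thesis using perp[of i' i b'] ib cc by (subst cinner_commute) simp
  next
    case 3
    then show ?thesis using perp ib cc by simp
  next
    case 4
    then show ?thesis using old cc by simp
  qed
qed

lemma gram_schmidt_stage_Suc_spanned:
  assumes stage: "gram_schmidt_stage r n f k w h N"
    and spanned: "\<forall>i<n. \<forall>p<r. f i N p = (\<Sum>b<k. h b N * w i b p)"
  shows "gram_schmidt_stage r n f k w h (Suc N)"
proof -
  have "\<exists>x. \<forall>i<n. \<forall>p<r. f i \<alpha> p = (\<Sum>b<k. x b * w i b p)" if "\<alpha> < Suc N" for \<alpha>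
  proof (cases "\<alpha> = N")
    case True
    then show ?thesis using spanned by (intro exI[of _ "\<lambda>b. h b N"]) simp
  next
    case False
    then show ?thesis using stage that by (simp add: gram_schmidt_stage_def)
  qed
  then show ?thesis using stage by (simp add: gram_schmidt_stage_def)
qed

lemma gram_schmidt_stage_Suc_extend:
  assumes gram: "uniform_gram r n f g" and stage: "gram_schmidt_stage r n f k w h N"
    and e: "\<And>i. e i = (\<lambda>p. f i N p - (\<Sum>b<k. h b N * w i b p))"
    and H: "\<And>\<alpha>. H \<alpha> = g N \<alpha> - (\<Sum>b<k. cnj (h b N) * h b \<alpha>)"
    and c: "c \<noteq> 0" "cnj c * c = H N"
  shows "gram_schmidt_stage r n f (Suc k) (\<lambda>i b. if b = k then (\<lambda>p. e i p / c) else w i b)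
           (\<lambda>b \<alpha>. if b = k then H \<alpha> / cnj c else h b \<alpha>) (Suc N)"
  unfolding gram_schmidt_stage_def
proof (intro conjI)
  note residual = gram_schmidt_residual[OF gram stage e H]
  have orth: "orthonormal r ({..<n} \<times> {..<k}) (\<lambda>(i, b). w i b)"
    and coeff: "\<And>i i' b \<alpha>. i < n \<Longrightarrow> i' < n \<Longrightarrow> b < k \<Longrightarrow>
                  cinner r (w i b) (f i' \<alpha>) = (if i = i' then h b \<alpha> else 0)"
    and span: "\<And>\<alpha>. \<alpha> < N \<Longrightarrow> \<exists>x. \<forall>i<n. \<forall>p<r. f i \<alpha> p = (\<Sum>b<k. x b * w i b p)"
    using stage by (simp_all add: gram_schmidt_stage_def)
  show "orthonormal r ({..<n} \<times> {..<Suc k})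
      (\<lambda>(i, b). if b = k then (\<lambda>p. e i p / c) else w i b)"
  proof (rule orthonormal_insert_block[OF orth])
    show "cinner r (w i b) (\<lambda>p. e i' p / c) = 0" if "i < n" "i' < n" "b < k" for i i' b
      using residual(1)[OF that] by (simp add: cinner_divide_right)
    show "cinner r (\<lambda>p. e i p / c) (\<lambda>p. e i' p / c) = (if i = i' then 1 else 0)"
      if "i < n" "i' < n" for i i'
      using residual(3)[OF that] c(1)
      by (simp add: cinner_divide_left cinner_divide_right field_simps flip: c(2))
  qed
  show "\<forall>i<n. \<forall>i'<n. \<forall>b<Suc k. \<forall>\<alpha>. cinner r (if b = k then \<lambda>p. e i p / c else w i b) (f i' \<alpha>)
      = (if i = i' then if b = k then H \<alpha> / cnj c else h b \<alpha> else 0)"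
    using residual(2) coeff by (auto simp: cinner_divide_left)
  show "\<forall>\<alpha><Suc N. \<exists>x. \<forall>i<n. \<forall>p<r.
      f i \<alpha> p = (\<Sum>b<Suc k. x b * (if b = k then \<lambda>p. e i p / c else w i b) p)"
  proof (intro allI impI)
    fix \<alpha> assume "\<alpha> < Suc N"
    have extend: "(\<Sum>b<Suc k. (x(k := z)) b * (if b = k then \<lambda>p. e i p / c else w i b) p)
        = (\<Sum>b<k. x b * w i b p) + z * (e i p / c)" for x z i p
    proof -
      have "(\<Sum>b<k. (x(k := z)) b * (if b = k then \<lambda>p. e i p / c else w i b) p) = (\<Sum>b<k. x b * w i b p)"
        by (rule sum.cong) auto
      then show ?thesis by simp
    qed
    show "\<exists>x. \<forall>i<n. \<forall>p<r. f i \<alpha> p = (\<Sum>b<Suc k. x b * (if b = k then \<lambda>p. e i p / c else w i b) p)"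
    proof (cases "\<alpha> = N")
      case True
      show ?thesis
        using c(1) by (intro exI[of _ "(\<lambda>b. h b N)(k := c)"]) (simp add: extend e True)
    next
      case False
      then obtain x where "\<forall>i<n. \<forall>p<r. f i \<alpha> p = (\<Sum>b<k. x b * w i b p)"
        using span \<open>\<alpha> < Suc N\<close> less_Suc_eq by blast
      then show ?thesis by (intro exI[of _ "x(k := 0)"]) (simp add: extend)
    qed
  qed
qed

lemma gram_schmidt_stage_Suc:
  assumes gram: "uniform_gram r n f g" and stage: "gram_schmidt_stage r n f k w h N"
  obtains k' w' h' where "k \<le> k'" "\<And>i b. b < k \<Longrightarrow> w' i b = w i b"
    "gram_schmidt_stage r n f k' w' h' (Suc N)"
proof (cases "n = 0")
  case True
  then show ?thesis by (intro that[of k w h]) (simp_all add: gram_schmidt_stage_def orthonormal_def)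
next
  case False
  define e where "e i = (\<lambda>p. f i N p - (\<Sum>b<k. h b N * w i b p))" for i
  define H where "H \<alpha> = g N \<alpha> - (\<Sum>b<k. cnj (h b N) * h b \<alpha>)" for \<alpha>
  note residual = gram_schmidt_residual[OF gram stage e_def H_def]
  show ?thesis
  proof (cases "H N = 0")
    case True
    have "e i p = 0" if "i < n" "p < r" for i p
      using cinner_self_eq_zero[of r "e i" p] residual(3)[OF that(1) that(1)] True that(2) by simp
    then have "\<forall>i<n. \<forall>p<r. f i N p = (\<Sum>b<k. h b N * w i b p)" by (simp add: e_def)
    then show ?thesis using gram_schmidt_stage_Suc_spanned[OF stage] by (intro that[of k w h]) simp_all
  next
    case False
    with residual(3)[of 0 0] \<open>n \<noteq> 0\<close> obtain c where "c \<noteq> 0" "cnj c * c = H N"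
      using cinner_self_square[of r "e 0"] by auto
    from gram_schmidt_stage_Suc_extend[OF gram stage e_def H_def this]
    show ?thesis by (intro that[of "Suc k"]) simp_all
  qed
qed

lemma gram_schmidt_stages:
  assumes gram: "uniform_gram r n f g" and stage: "gram_schmidt_stage r n f k w h 0"
  obtains k' w' h' where "k \<le> k'" "\<And>i b. b < k \<Longrightarrow> w' i b = w i b"
    "gram_schmidt_stage r n f k' w' h' N"
proof (induction N arbitrary: thesis)
  case 0
  then show ?case using stage by blast
next
  case (Suc N)
  obtain k1 w1 h1 where 1: "k \<le> k1" "\<And>i b. b < k \<Longrightarrow> w1 i b = w i b"
    "gram_schmidt_stage r n f k1 w1 h1 N"
    using Suc.IH by blast
  obtain k2 w2 h2 where 2: "k1 \<le> k2" "\<And>i b. b < k1 \<Longrightarrow> w2 i b = w1 i b"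
    "gram_schmidt_stage r n f k2 w2 h2 (Suc N)"
    using gram_schmidt_stage_Suc[OF gram 1(3)] by blast
  show ?case using 1 2 by (intro Suc.prems[of k2 w2 h2]) auto
qed

lemma orthonormal_extend_to_basis:
  fixes v :: "nat \<Rightarrow> nat \<Rightarrow> complex"
  assumes orth: "orthonormal r {..<m} v"
  obtains u where "m \<le> r" "\<And>c. c < m \<Longrightarrow> u c = v c" "orthonormal r {..<r} u"
proof -
  \<comment> \<open>Orthonormalise the standard basis after \<open>v\<close>: the result spans \<open>\<complex>\<^sup>r\<close>, so it has \<open>r\<close> elements.\<close>
  define f :: "nat \<Rightarrow> nat \<Rightarrow> nat \<Rightarrow> complex" where "f i \<alpha> = (\<lambda>p. if p = \<alpha> then 1 else 0)" for i \<alpha>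
  have gram: "uniform_gram r 1 f (\<lambda>\<alpha> \<beta>. cinner r (f 0 \<alpha>) (f 0 \<beta>))"
    by (simp add: uniform_gram_def f_def)
  have "orthonormal r ({..<1::nat} \<times> {..<m}) (\<lambda>(i, b). v b)"
    using orth by (auto simp: orthonormal_def)
  then have "gram_schmidt_stage r 1 f m (\<lambda>i. v) (\<lambda>b \<alpha>. cinner r (v b) (f 0 \<alpha>)) 0"
    by (simp add: gram_schmidt_stage_def)
  then obtain K w h where K: "m \<le> K" "\<And>i b. b < m \<Longrightarrow> w i b = v b"
    and stage: "gram_schmidt_stage r 1 f K w h r"
    using gram_schmidt_stages[OF gram] by blast
  have orth_w: "orthonormal r {..<K} (w 0)"
    using stage by (auto simp: gram_schmidt_stage_def orthonormal_def)
  have "\<forall>\<alpha><r. \<exists>x. \<forall>p<r. f 0 \<alpha> p = (\<Sum>b<K. x b * w 0 b p)"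
    using stage by (simp add: gram_schmidt_stage_def)
  then have "K = r" unfolding f_def by (rule orthonormal_card_eq[OF orth_w])
  with K orth_w show ?thesis by (intro that[of "w 0"]) simp_all
qed

lemma cinner_columns:
  assumes "A \<in> carrier_mat r a" "B \<in> carrier_mat r b" "q < a" "s < b"
  shows "cinner r (\<lambda>p. A $$ (p, q)) (\<lambda>p. B $$ (p, s)) = (mat_adjoint A * B) $$ (q, s)"
  unfolding cinner_def by (rule index_adjoint_mult_mat[OF assms, symmetric])

lemma orthonormal_columns_isometry:
  assumes "orthonormal r {..<m} u"
  shows "mat_adjoint (mat r m (\<lambda>(p, c). u c p)) * mat r m (\<lambda>(p, c). u c p) = 1\<^sub>m m"
proof (rule eq_matI)
  fix c c' assume "c < dim_row (1\<^sub>m m :: complex mat)" "c' < dim_col (1\<^sub>m m :: complex mat)"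
  then have c: "c < m" and c': "c' < m" by auto
  have "(mat_adjoint (mat r m (\<lambda>(p, c). u c p)) * mat r m (\<lambda>(p, c). u c p)) $$ (c, c')
      = cinner r (u c) (u c')"
    using cinner_columns[of "mat r m (\<lambda>(p, c). u c p)" r m "mat r m (\<lambda>(p, c). u c p)" m c c'] c c'
    by (simp add: cinner_def)
  then show "(mat_adjoint (mat r m (\<lambda>(p, c). u c p)) * mat r m (\<lambda>(p, c). u c p)) $$ (c, c') = 1\<^sub>m m $$ (c, c')"
    using orthonormalD[OF assms] c c' by simp
qed auto

subsection \<open>Range orthogonality preservers\<close>

definition matrix_unit :: "nat \<Rightarrow> nat \<Rightarrow> nat \<Rightarrow> complex mat" where
  "matrix_unit n i j = mat n n (\<lambda>(a, b). if a = i \<and> b = j then 1 else 0)"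

lemma dim_matrix_unit [simp]: "dim_row (matrix_unit n i j) = n" "dim_col (matrix_unit n i j) = n"
  unfolding matrix_unit_def by simp_all

lemma matrix_unit_carrier [simp]: "matrix_unit n i j \<in> carrier_mat n n"
  unfolding carrier_mat_def by simp

lemma index_matrix_unit [simp]:
  "a < n \<Longrightarrow> b < n \<Longrightarrow> matrix_unit n i j $$ (a, b) = (if a = i \<and> b = j then 1 else 0)"
  unfolding matrix_unit_def by simp

lemma lin_mat_map_index_expansion:
  assumes lin: "lin_mat_map n r \<Phi>" and A: "A \<in> carrier_mat n n" and p: "p < r" and q: "q < r"
  shows "\<Phi> A $$ (p, q) = (\<Sum>i<n. \<Sum>j<n. A $$ (i, j) * \<Phi> (matrix_unit n i j) $$ (p, q))"
proof -
  have C: "\<And>B. B \<in> carrier_mat n n \<Longrightarrow> \<Phi> B \<in> carrier_mat r r"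
    and add: "\<And>B C. B \<in> carrier_mat n n \<Longrightarrow> C \<in> carrier_mat n n \<Longrightarrow> \<Phi> (B + C) = \<Phi> B + \<Phi> C"
    and smult: "\<And>c B. B \<in> carrier_mat n n \<Longrightarrow> \<Phi> (c \<cdot>\<^sub>m B) = c \<cdot>\<^sub>m \<Phi> B"
    using lin unfolding lin_mat_map_def by auto
  define restrict where "restrict S = mat n n (\<lambda>(a, b). if (a, b) \<in> S then A $$ (a, b) else 0)" for S
  have restrict_carrier: "restrict S \<in> carrier_mat n n" for S unfolding restrict_def by auto
  have expansion: "\<Phi> (restrict S) $$ (p, q) = (\<Sum>x\<in>S. A $$ x * \<Phi> (matrix_unit n (fst x) (snd x)) $$ (p, q))"
    if "finite S" for S
    using that
  proof (induct S rule: finite_induct)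
    case empty
    have "restrict {} = 0 \<cdot>\<^sub>m restrict {}" by (rule eq_matI) (auto simp: restrict_def)
    then have "\<Phi> (restrict {}) $$ (p, q) = (0 \<cdot>\<^sub>m \<Phi> (restrict {})) $$ (p, q)"
      using smult[OF restrict_carrier] by metis
    also have "\<dots> = 0" using C[OF restrict_carrier[of "{}"]] p q by auto
    finally show ?case by simp
  next
    case (insert x S)
    obtain a b where x: "x = (a, b)" by (cases x)
    have "restrict (insert x S) = restrict S + A $$ x \<cdot>\<^sub>m matrix_unit n a b"
      by (rule eq_matI) (use insert.hyps in \<open>auto simp: restrict_def x\<close>)
    then have "\<Phi> (restrict (insert x S)) = \<Phi> (restrict S) + A $$ x \<cdot>\<^sub>m \<Phi> (matrix_unit n a b)"
      using add[OF restrict_carrier, of "A $$ x \<cdot>\<^sub>m matrix_unit n a b"] smult[of "matrix_unit n a b"] by simp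
    then show ?case using insert C[OF restrict_carrier] C[of "matrix_unit n a b"] p q x by simp
  qed
  have "restrict ({..<n} \<times> {..<n}) = A" by (rule eq_matI) (use A in \<open>auto simp: restrict_def\<close>)
  then have "\<Phi> A $$ (p, q) = (\<Sum>x\<in>{..<n} \<times> {..<n}. A $$ x * \<Phi> (matrix_unit n (fst x) (snd x)) $$ (p, q))"
    using expansion[of "{..<n} \<times> {..<n}"] by simp
  then show ?thesis by (simp add: sum.cartesian_product case_prod_beta)
qed

lemma adjoint_matrix_unit_mult_eq_zero:
  assumes "i \<noteq> i'"
  shows "mat_adjoint (matrix_unit n i j) * matrix_unit n i' l = 0\<^sub>m n n"
proof (rule eq_matI)
  fix c d assume "c < dim_row (0\<^sub>m n n :: complex mat)" "d < dim_col (0\<^sub>m n n :: complex mat)"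
  then have c: "c < n" and d: "d < n" by auto
  have "(mat_adjoint (matrix_unit n i j) * matrix_unit n i' l) $$ (c, d)
      = (\<Sum>a<n. cnj (matrix_unit n i j $$ (a, c)) * matrix_unit n i' l $$ (a, d))"
    using c d by (intro index_adjoint_mult_mat) auto
  also have "\<dots> = 0" by (rule sum.neutral) (use c d assms in auto)
  finally show "(mat_adjoint (matrix_unit n i j) * matrix_unit n i' l) $$ (c, d) = 0\<^sub>m n n $$ (c, d)"
    using c d by simp
qed auto

lemma adjoint_matrix_unit_sum_mult_diff_eq_zero:
  assumes "i \<noteq> i'" "i < n" "i' < n"
  shows "mat_adjoint (matrix_unit n i j + matrix_unit n i' j) * (matrix_unit n i l + (-1) \<cdot>\<^sub>m matrix_unit n i' l)
       = 0\<^sub>m n n"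
proof (rule eq_matI)
  fix c d assume "c < dim_row (0\<^sub>m n n :: complex mat)" "d < dim_col (0\<^sub>m n n :: complex mat)"
  then have c: "c < n" and d: "d < n" by auto
  have "(mat_adjoint (matrix_unit n i j + matrix_unit n i' j) * (matrix_unit n i l + (-1) \<cdot>\<^sub>m matrix_unit n i' l)) $$ (c, d)
      = (\<Sum>a<n. if c = j \<and> d = l then (if a = i then 1 else 0) - (if a = i' then 1 else 0) else 0)"
    using c d assms
    by (subst index_adjoint_mult_mat[of _ n n _ n]) (auto simp: matrix_unit_def intro!: sum.cong)
  also have "\<dots> = 0"
    using assms by (cases "c = j \<and> d = l") (simp_all add: sum_subtractf)
  finally show "(mat_adjoint (matrix_unit n i j + matrix_unit n i' j) * (matrix_unit n i l + (-1) \<cdot>\<^sub>m matrix_unit n i' l)) $$ (c, d)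
      = 0\<^sub>m n n $$ (c, d)"
    using c d by simp
qed auto

locale range_orthogonality_preserver =
  fixes n r :: nat and \<Phi> :: "complex mat \<Rightarrow> complex mat"
  assumes linear: "lin_mat_map n r \<Phi>"
    and preserves: "\<forall>A \<in> carrier_mat n n. \<forall>B \<in> carrier_mat n n.
      mat_adjoint A * B = 0\<^sub>m n n \<longrightarrow> mat_adjoint (\<Phi> A) * \<Phi> B = 0\<^sub>m r r"
begin

lemma image_carrier: "A \<in> carrier_mat n n \<Longrightarrow> \<Phi> A \<in> carrier_mat r r"
  and image_add: "A \<in> carrier_mat n n \<Longrightarrow> B \<in> carrier_mat n n \<Longrightarrow> \<Phi> (A + B) = \<Phi> A + \<Phi> B"
  and image_smult: "A \<in> carrier_mat n n \<Longrightarrow> \<Phi> (c \<cdot>\<^sub>m A) = c \<cdot>\<^sub>m \<Phi> A"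
  using linear unfolding lin_mat_map_def by auto

lemma adjoint_mult_image_units_eq_zero:
  "i \<noteq> i' \<Longrightarrow> mat_adjoint (\<Phi> (matrix_unit n i j)) * \<Phi> (matrix_unit n i' l) = 0\<^sub>m r r"
  using preserves adjoint_matrix_unit_mult_eq_zero by simp

lemma adjoint_mult_image_units_row_invariant:
  assumes i: "i < n" and i': "i' < n"
  shows "mat_adjoint (\<Phi> (matrix_unit n i j)) * \<Phi> (matrix_unit n i l)
       = mat_adjoint (\<Phi> (matrix_unit n i' j)) * \<Phi> (matrix_unit n i' l)"
proof (cases "i = i'")
  case False
  let ?a = "\<Phi> (matrix_unit n i j)" and ?a' = "\<Phi> (matrix_unit n i' j)"
    and ?b = "\<Phi> (matrix_unit n i l)" and ?b' = "\<Phi> (matrix_unit n i' l)"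
  have C: "?a \<in> carrier_mat r r" "?a' \<in> carrier_mat r r" "?b \<in> carrier_mat r r" "?b' \<in> carrier_mat r r"
    by (simp_all add: image_carrier)
  have "\<Phi> (matrix_unit n i j + matrix_unit n i' j) = ?a + ?a'" by (rule image_add) simp_all
  moreover have "\<Phi> (matrix_unit n i l + (-1) \<cdot>\<^sub>m matrix_unit n i' l) = ?b + (-1) \<cdot>\<^sub>m ?b'"
    using image_add[of "matrix_unit n i l" "(-1) \<cdot>\<^sub>m matrix_unit n i' l"] image_smult[of "matrix_unit n i' l"]
    by simp
  moreover have "mat_adjoint (\<Phi> (matrix_unit n i j + matrix_unit n i' j))
      * \<Phi> (matrix_unit n i l + (-1) \<cdot>\<^sub>m matrix_unit n i' l) = 0\<^sub>m r r"
    using preserves adjoint_matrix_unit_sum_mult_diff_eq_zero[OF False i i'] by simp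
  ultimately have "mat_adjoint (?a + ?a') * (?b + (-1) \<cdot>\<^sub>m ?b') = 0\<^sub>m r r" by simp
  show ?thesis
  proof (rule eq_matI)
    fix q s assume "q < dim_row (mat_adjoint ?a' * ?b')" "s < dim_col (mat_adjoint ?a' * ?b')"
    then have q: "q < r" and s: "s < r" using C by auto
    have "(mat_adjoint (?a + ?a') * (?b + (-1) \<cdot>\<^sub>m ?b')) $$ (q, s)
        = (\<Sum>p<r. cnj ((?a + ?a') $$ (p, q)) * (?b + (-1) \<cdot>\<^sub>m ?b') $$ (p, s))"
      using C q s by (intro index_adjoint_mult_mat) auto
    also have "\<dots> = (mat_adjoint ?a * ?b) $$ (q, s) - (mat_adjoint ?a * ?b') $$ (q, s)
        + (mat_adjoint ?a' * ?b) $$ (q, s) - (mat_adjoint ?a' * ?b') $$ (q, s)"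
      unfolding index_adjoint_mult_mat[OF C(1) C(3) q s] index_adjoint_mult_mat[OF C(1) C(4) q s]
        index_adjoint_mult_mat[OF C(2) C(3) q s] index_adjoint_mult_mat[OF C(2) C(4) q s]
      using C q s by (simp add: algebra_simps sum.distrib sum_subtractf)
    finally show "(mat_adjoint ?a * ?b) $$ (q, s) = (mat_adjoint ?a' * ?b') $$ (q, s)"
      using \<open>mat_adjoint (?a + ?a') * (?b + (-1) \<cdot>\<^sub>m ?b') = 0\<^sub>m r r\<close> q s False
        adjoint_mult_image_units_eq_zero[of i i'] adjoint_mult_image_units_eq_zero[of i' i]
      by simp
  qed (use C in auto)
qed simp


lemma uniform_gram_image_unit_columns:
  defines "f \<equiv> \<lambda>i \<alpha> p. \<Phi> (matrix_unit n i (\<alpha> div r)) $$ (p, \<alpha> mod r)"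
  shows "uniform_gram r n f (\<lambda>\<alpha> \<beta>. cinner r (f 0 \<alpha>) (f 0 \<beta>))"
  unfolding uniform_gram_def
proof (intro allI impI)
  fix i i' \<alpha> \<beta> assume i: "i < n" and i': "i' < n"
  show "cinner r (f i \<alpha>) (f i' \<beta>) = (if i = i' then cinner r (f 0 \<alpha>) (f 0 \<beta>) else 0)"
  proof (cases "r = 0")
    case False
    then have mods: "\<alpha> mod r < r" "\<beta> mod r < r" by simp_all
    have "cinner r (f a \<alpha>) (f a' \<beta>)
        = (mat_adjoint (\<Phi> (matrix_unit n a (\<alpha> div r))) * \<Phi> (matrix_unit n a' (\<beta> div r))) $$ (\<alpha> mod r, \<beta> mod r)"
      for a a'
      unfolding f_def using mods by (intro cinner_columns[of _ r r _ r] image_carrier) simp_all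
    then show ?thesis
      using adjoint_mult_image_units_row_invariant[OF i, of 0] adjoint_mult_image_units_eq_zero[of i i'] i mods
      by auto
  qed (simp add: cinner_def)
qed

lemma image_units_factorisation:
  obtains k :: nat and w :: "nat \<Rightarrow> nat \<Rightarrow> nat \<Rightarrow> complex" and Y where "orthonormal r ({..<n} \<times> {..<k}) (\<lambda>(i, b). w i b)"
    and "\<And>i j p q. i < n \<Longrightarrow> j < n \<Longrightarrow> p < r \<Longrightarrow> q < r \<Longrightarrow>
      \<Phi> (matrix_unit n i j) $$ (p, q) = (\<Sum>b<k. Y j q b * w i b p)"
proof -
  define f where "f = (\<lambda>i \<alpha> p. \<Phi> (matrix_unit n i (\<alpha> div r)) $$ (p, \<alpha> mod r))"
  have "gram_schmidt_stage r n f 0 w h 0" for w h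
    by (simp add: gram_schmidt_stage_def orthonormal_def)
  then obtain k w h where stage: "gram_schmidt_stage r n f k w h (n * r)"
    using gram_schmidt_stages[OF uniform_gram_image_unit_columns[folded f_def]] by metis
  then have "\<forall>\<alpha>\<in>{..<n * r}. \<exists>x. \<forall>i<n. \<forall>p<r. f i \<alpha> p = (\<Sum>b<k. x b * w i b p)"
    by (simp add: gram_schmidt_stage_def)
  then obtain X where X: "\<And>\<alpha> i p. \<alpha> < n * r \<Longrightarrow> i < n \<Longrightarrow> p < r \<Longrightarrow> f i \<alpha> p = (\<Sum>b<k. X \<alpha> b * w i b p)"
    by (metis bchoice lessThan_iff)
  show ?thesis
  proof (rule that[of k w "\<lambda>j q. X (j * r + q)"])
    show "orthonormal r ({..<n} \<times> {..<k}) (\<lambda>(i, b). w i b)"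
      using stage by (simp add: gram_schmidt_stage_def)
    fix i j p q assume "i < n" "j < n" "p < r" "q < r"
    then show "\<Phi> (matrix_unit n i j) $$ (p, q) = (\<Sum>b<k. X (j * r + q) b * w i b p)"
      using X[of "j * r + q" i p] block_index_less[of q r j n] by (simp add: f_def mult.commute)
  qed
qed


lemma pad_kron_representation:
  obtains k S T where "n * k \<le> r" "S \<in> carrier_mat r r" "T \<in> carrier_mat r r"
    "mat_adjoint S * S = 1\<^sub>m r" "\<And>A. A \<in> carrier_mat n n \<Longrightarrow> \<Phi> A = S * pad_kron r k A * T"
proof -
  obtain k :: nat and w Y where orth: "orthonormal r ({..<n} \<times> {..<k}) (\<lambda>(i, b). w i b)"
    and factor: "\<And>i j p q. i < n \<Longrightarrow> j < n \<Longrightarrow> p < r \<Longrightarrow> q < r \<Longrightarrow>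
      \<Phi> (matrix_unit n i j) $$ (p, q) = (\<Sum>b<k. Y j q b * w i b p)"
    by (rule image_units_factorisation) blast
  have "orthonormal r {..<n * k} ((\<lambda>(i, b). w i b) \<circ> (\<lambda>c. (c mod n, c div n)))"
  proof (rule orthonormal_reindex[OF orth])
    show "inj_on (\<lambda>c. (c mod n, c div n)) {..<n * k}"
      by (rule inj_onI) (metis div_mult_mod_eq prod.inject)
    have "c mod n < n \<and> c div n < k" if "c < n * k" for c
      using that by (cases "n = 0") (simp_all add: less_mult_imp_div_less mult.commute)
    then show "(\<lambda>c. (c mod n, c div n)) ` {..<n * k} \<subseteq> {..<n} \<times> {..<k}" by auto
  qed
  then obtain u where nk: "n * k \<le> r"
    and extends: "\<And>c. c < n * k \<Longrightarrow> u c = ((\<lambda>(i, b). w i b) \<circ> (\<lambda>c. (c mod n, c div n))) c"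
    and basis: "orthonormal r {..<r} u"
    by (rule orthonormal_extend_to_basis) blast
  have u: "u c = w (c mod n) (c div n)" if "c < n * k" for c using extends[OF that] by simp
  define S where "S = mat r r (\<lambda>(p, c). u c p)"
  define T where "T = mat r r (\<lambda>(c, q). if c < n * k then Y (c mod n) q (c div n) else 0)"
  have S: "S \<in> carrier_mat r r" and T: "T \<in> carrier_mat r r" by (simp_all add: S_def T_def)
  show ?thesis
  proof (rule that[OF nk S T])
    show "mat_adjoint S * S = 1\<^sub>m r" unfolding S_def by (rule orthonormal_columns_isometry[OF basis])
    fix A :: "complex mat" assume A: "A \<in> carrier_mat n n"
    show "\<Phi> A = S * pad_kron r k A * T"
    proof (rule eq_matI)
      fix p q assume "p < dim_row (S * pad_kron r k A * T)" "q < dim_col (S * pad_kron r k A * T)"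
      then have p: "p < r" and q: "q < r" using S T by auto
      have "(S * pad_kron r k A * T) $$ (p, q)
          = (\<Sum>b<k. \<Sum>i<n. \<Sum>j<n. S $$ (p, b * n + i) * A $$ (i, j) * T $$ (b * n + j, q))"
        by (rule index_mult_pad_kron_mult[OF S T A nk p q])
      also have "\<dots> = (\<Sum>b<k. \<Sum>i<n. \<Sum>j<n. A $$ (i, j) * (Y j q b * w i b p))"
      proof (intro sum.cong refl)
        fix b i j assume "b \<in> {..<k}" "i \<in> {..<n}" "j \<in> {..<n}"
        then have "b * n + i < n * k" "b * n + j < n * k" by (simp_all add: block_index_less)
        then have "S $$ (p, b * n + i) = w i b p" "T $$ (b * n + j, q) = Y j q b"
          using p q nk \<open>i \<in> {..<n}\<close> \<open>j \<in> {..<n}\<close> by (simp_all add: S_def T_def u)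
        then show "S $$ (p, b * n + i) * A $$ (i, j) * T $$ (b * n + j, q) = A $$ (i, j) * (Y j q b * w i b p)"
          by simp
      qed
      also have "\<dots> = (\<Sum>i<n. \<Sum>j<n. \<Sum>b<k. A $$ (i, j) * (Y j q b * w i b p))"
        by (subst sum.swap) (simp add: sum.swap[of _ "{..<k}" "{..<n}"])
      also have "\<dots> = (\<Sum>i<n. \<Sum>j<n. A $$ (i, j) * \<Phi> (matrix_unit n i j) $$ (p, q))"
        using p q by (intro sum.cong refl) (simp add: factor sum_distrib_left)
      also have "\<dots> = \<Phi> A $$ (p, q)"
        by (rule lin_mat_map_index_expansion[OF linear A p q, symmetric])
      finally show "\<Phi> A $$ (p, q) = (S * pad_kron r k A * T) $$ (p, q)" ..
    qed (use S T image_carrier[OF A] in auto)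
  qed
qed

end

theorem theorem4p7:
  fixes \<Phi> :: "complex mat \<Rightarrow> complex mat" and n r :: nat
  assumes "lin_mat_map n r \<Phi>"
  shows "(\<forall>A \<in> carrier_mat n n. \<forall>B \<in> carrier_mat n n.
            mat_adjoint A * B = 0\<^sub>m n n \<longrightarrow> mat_adjoint (\<Phi> A) * \<Phi> B = 0\<^sub>m r r)
         \<longleftrightarrow>
         (\<exists>k S T. n * k \<le> r \<and> S \<in> carrier_mat r r \<and> T \<in> carrier_mat r r \<and>
            mat_adjoint S * S = 1\<^sub>m r \<and>
            (\<forall>A \<in> carrier_mat n n. \<Phi> A = S * pad_kron r k A * T))"
    (is "?preserves \<longleftrightarrow> ?representable")
proof
  assume ?preserves
  then interpret range_orthogonality_preserver n r \<Phi> using assms by unfold_locales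
  obtain k S T where "n * k \<le> r" "S \<in> carrier_mat r r" "T \<in> carrier_mat r r"
    "mat_adjoint S * S = 1\<^sub>m r" "\<And>A. A \<in> carrier_mat n n \<Longrightarrow> \<Phi> A = S * pad_kron r k A * T"
    by (rule pad_kron_representation) blast
  then show ?representable by blast
next
  assume ?representable
  then obtain k S T where "n * k \<le> r" "S \<in> carrier_mat r r" "T \<in> carrier_mat r r"
    "mat_adjoint S * S = 1\<^sub>m r" "\<forall>A \<in> carrier_mat n n. \<Phi> A = S * pad_kron r k A * T"
    by blast
  then show ?preserves by (rule pad_kron_sandwich_preserves_range_orthogonality)
qed

end
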